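(* If the NNF DAG of $F$ (equivalently $\hat F(\mathbf{X},\neg\mathbf{X},\mathbf{Y})$) is in weak decomposable NNF (wDNNF), then $\delta_i=\Delta_i$ and $\gamma_i=\Gamma_i$ (as Boolean functions of $\mathbf{X}_{i+1}^n,\mathbf{Y}$) for every $i\in\{1,\ldots,n\}$.
   Context: $\mathbf{X}=(x_1,\ldots,x_n)$ are outputs and $\mathbf{Y}=(y_1,\ldots,y_m)$ inputs; $\mathbf{X}_i^j=(x_i,\ldots,x_j)$. $\Delta_i\equiv\neg\exists\mathbf{X}_1^{i-1}F(\mathbf{X}_1^{i-1},0,\mathbf{X}_{i+1}^n,\mathbf{Y})$ and $\Gamma_i\equiv\neg\exists\mathbf{X}_1^{i-1}F(\mathbf{X}_1^{i-1},1,\mathbf{X}_{i+1}^n,\mathbf{Y})$ (the constant occupies the position of $x_i$). An NNF formula uses only $\wedge,\vee$ and negations applied to variables, represented as a rooted DAG with $\wedge/\vee$ internal nodes and literal leaves. For an internal node representing subformula $\alpha$, $\mathrm{lits}(\alpha)$ is the set of literals labeling leaves having a path to that node. The NNF DAG is in wDNNF if for every $\wedge$-node representing $\alpha=\alpha_1\wedge\cdots\wedge\alpha_k$ there is no literal $l$ and distinct $p,q\in\{1,\ldots,k\}$ with $l\in\mathrm{lits}(\alpha_p)$ and $\neg l\in\mathrm{lits}(\alpha_q)$. $\hat F(\mathbf{X},\overline{\mathbf{X}},\mathbf{Y})$ is obtained from the NNF DAG of $F$ by replacing each leaf $\neg x_i$ ($x_i\in\mathbf{X}$) by a fresh variable $\overline{x_i}$.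 For length-$i$ bit-vectors $\mathbf{b},\mathbf{c}$, $\hat F(\mathbf{b},\mathbf{X}_{i+1}^n,\mathbf{c},\neg\mathbf{X}_{i+1}^n,\mathbf{Y})$ sets $(x_1,\ldots,x_i):=\mathbf{b}$, $(\overline{x_1},\ldots,\overline{x_i}):=\mathbf{c}$ and $\overline{x_k}:=\neg x_k$ for $k>i$. Define $\delta_i=\neg\hat F(\mathbf{1}^{i-1}0,\mathbf{X}_{i+1}^n,\mathbf{1}^i,\neg\mathbf{X}_{i+1}^n,\mathbf{Y})$ and $\gamma_i=\neg\hat F(\mathbf{1}^{i},\mathbf{X}_{i+1}^n,\mathbf{1}^{i-1}0,\neg\mathbf{X}_{i+1}^n,\mathbf{Y})$, where $\mathbf{1}^{i-1}0$ is $i-1$ ones followed by a $0$. *)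

theory Defs
  imports Main
begin

text \<open>A rooted NNF DAG is represented by its unfolding into a tree
(sharing does not affect the semantics nor the set lits of a node).\<close>

datatype 'v nnf = Lit bool 'v | And "'v nnf list" | Or "'v nnf list"

text \<open>Variables: Inl k is the output x_k (1 \<le> k \<le> n), Inr y is an input variable.\<close>

type_synonym 'y fvar = "nat + 'y"

fun eval :: "('v \<Rightarrow> bool) \<Rightarrow> 'v nnf \<Rightarrow> bool" where
  "eval s (Lit b v) = (if b then s v else \<not> s v)"
| "eval s (And fs) = (\<forall>f\<in>set fs. eval s f)"
| "eval s (Or fs) = (\<exists>f\<in>set fs. eval s f)"

fun vars :: "'v nnf \<Rightarrow> 'v set" where
  "vars (Lit b v) = {v}"
| "vars (And fs) = (\<Union>f\<in>set fs. vars f)"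
| "vars (Or fs) = (\<Union>f\<in>set fs. vars f)"

fun lits :: "'v nnf \<Rightarrow> (bool \<times> 'v) set" where
  "lits (Lit b v) = {(b, v)}"
| "lits (And fs) = (\<Union>f\<in>set fs. lits f)"
| "lits (Or fs) = (\<Union>f\<in>set fs. lits f)"

fun wDNNF :: "'v nnf \<Rightarrow> bool" where
  "wDNNF (Lit b v) = True"
| "wDNNF (And fs) = ((\<forall>f\<in>set fs. wDNNF f) \<and>
     (\<forall>p<length fs. \<forall>q<length fs. p \<noteq> q \<longrightarrow>
        (\<forall>b v. (b, v) \<in> lits (fs ! p) \<longrightarrow> (\<not> b, v) \<notin> lits (fs ! q))))"
| "wDNNF (Or fs) = (\<forall>f\<in>set fs. wDNNF f)"

text \<open>Evaluation of \<hat>F(X, Xbar, Y): a leaf \<not>x_k is replaced by the fresh variable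
xbar_k, whose value is cb k; a leaf x_k takes value a k; inputs evaluate normally.\<close>
fun heval :: "(nat \<Rightarrow> bool) \<Rightarrow> (nat \<Rightarrow> bool) \<Rightarrow> ('y \<Rightarrow> bool) \<Rightarrow> 'y fvar nnf \<Rightarrow> bool" where
  "heval a cb ys (Lit b (Inl k)) = (if b then a k else cb k)"
| "heval a cb ys (Lit b (Inr y)) = (if b then ys y else \<not> ys y)"
| "heval a cb ys (And fs) = (\<forall>f\<in>set fs. heval a cb ys f)"
| "heval a cb ys (Or fs) = (\<exists>f\<in>set fs. heval a cb ys f)"

definition asg :: "(nat \<Rightarrow> bool) \<Rightarrow> ('y \<Rightarrow> bool) \<Rightarrow> 'y fvar \<Rightarrow> bool" where
  "asg x ys v = (case v of Inl k \<Rightarrow> x k | Inr y \<Rightarrow> ys y)"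

definition Delta :: "'y fvar nnf \<Rightarrow> nat \<Rightarrow> (nat \<Rightarrow> bool) \<Rightarrow> ('y \<Rightarrow> bool) \<Rightarrow> bool" where
  "Delta F i x ys = (\<not> (\<exists>b. eval (asg (\<lambda>k. if k < i then b k else if k = i then False else x k) ys) F))"

definition Gamma :: "'y fvar nnf \<Rightarrow> nat \<Rightarrow> (nat \<Rightarrow> bool) \<Rightarrow> ('y \<Rightarrow> bool) \<Rightarrow> bool" where
  "Gamma F i x ys = (\<not> (\<exists>b. eval (asg (\<lambda>k. if k < i then b k else if k = i then True else x k) ys) F))"

definition delta :: "'y fvar nnf \<Rightarrow> nat \<Rightarrow> (nat \<Rightarrow> bool) \<Rightarrow> ('y \<Rightarrow> bool) \<Rightarrow> bool" where
  "delta F i x ys = (\<not> heval (\<lambda>k. if k < i then True else if k = i then False else x k)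
                              (\<lambda>k. if k \<le> i then True else \<not> x k) ys F)"

definition gamma :: "'y fvar nnf \<Rightarrow> nat \<Rightarrow> (nat \<Rightarrow> bool) \<Rightarrow> ('y \<Rightarrow> bool) \<Rightarrow> bool" where
  "gamma F i x ys = (\<not> heval (\<lambda>k. if k \<le> i then True else x k)
                              (\<lambda>k. if k < i then True else if k = i then False else \<not> x k) ys F)"

end

theory Submission
  imports Defs
begin

text \<open>Relaxing a quantified output to "both rails true" in \<open>\<hat>F\<close> can only over-approximate
  the existential quantification, since \<open>\<hat>F\<close> is monotone. The converse is where wDNNF enters:
  from a satisfying dual-rail evaluation one reads off a genuine assignment, and at a
  conjunction the choices made by the conjuncts never conflict, because a variable occurring
  with both polarities below a conjunction occurs in only one conjunct.\<close>

lemma eval_mono_lits: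
  assumes "eval s F"
    and "\<forall>v. (True, v) \<in> lits F \<longrightarrow> s v \<longrightarrow> s' v"
    and "\<forall>v. (False, v) \<in> lits F \<longrightarrow> s' v \<longrightarrow> s v"
  shows "eval s' F"
  using assms
proof (induction F)
  case (And fs)
  then show ?case by simp blast
next
  case (Or fs)
  then show ?case by simp blast
qed (auto split: if_splits)

lemma heval_mono:
  assumes "heval a cb ys F" and "\<forall>k. a k \<longrightarrow> a' k" and "\<forall>k. cb k \<longrightarrow> cb' k"
  shows "heval a' cb' ys F"
  using assms by (induction a cb ys F rule: heval.induct) (auto split: if_splits)

lemma heval_complement_eq_eval: "heval b (\<lambda>k. \<not> b k) ys F = eval (asg b ys) F"
  by (induction b "\<lambda>k. \<not> b k" ys F rule: heval.induct) (auto simp: asg_def)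

lemma wDNNF_heval_imp_eval:
  assumes "wDNNF F" and "heval a cb ys F"
  shows "\<exists>b. eval (asg b ys) F \<and> (\<forall>k. a k \<noteq> cb k \<longrightarrow> b k = a k)"
  using assms
proof (induction F)
  case (Lit pos w)
  show ?case
  proof (cases w)
    case (Inl k)
    with Lit.prems(2) show ?thesis
      by (intro exI[of _ "a(k := pos)"]) (auto simp: asg_def split: if_splits)
  next
    case (Inr y)
    with Lit.prems(2) show ?thesis by (intro exI[of _ a]) (simp add: asg_def)
  qed
next
  case (Or fs)
  then obtain f where "f \<in> set fs" "heval a cb ys f" by auto
  with Or.prems(1) Or.IH show ?case by fastforce
next
  case (And fs)
  have "\<forall>f\<in>set fs. \<exists>b. eval (asg b ys) f \<and> (\<forall>k. a k \<noteq> cb k \<longrightarrow> b k = a k)"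
    using And by simp
  then obtain B where B: "\<And>f. f \<in> set fs \<Longrightarrow>
      eval (asg (B f) ys) f \<and> (\<forall>k. a k \<noteq> cb k \<longrightarrow> B f k = a k)"
    by metis
  have separated: "f = g"
    if fg: "f \<in> set fs" "g \<in> set fs" and opposite: "(True, Inl k) \<in> lits f" "(False, Inl k) \<in> lits g"
    for f g k
  proof -
    obtain p q where "p < length fs" "fs ! p = f" "q < length fs" "fs ! q = g"
      using fg by (meson in_set_conv_nth)
    with And.prems(1) opposite show ?thesis by (metis wDNNF.simps(2) not_True_eq_False)
  qed
  \<comment> \<open>Where the rails differ the value is forced; elsewhere set \<open>x\<^sub>k\<close> true iff some conjunct
    reading \<open>x\<^sub>k\<close> positively chose it true.\<close>
  define b where "b k = (if a k \<noteq> cb k then a k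
      else \<exists>f\<in>set fs. (True, Inl k) \<in> lits f \<and> B f k)" for k
  have "eval (asg b ys) g" if g: "g \<in> set fs" for g
  proof (rule eval_mono_lits)
    show "eval (asg (B g) ys) g" using B[OF g] by blast
    show "\<forall>v. (True, v) \<in> lits g \<longrightarrow> asg (B g) ys v \<longrightarrow> asg b ys v"
      using B[OF g] g by (auto simp: asg_def b_def split: sum.split)
    show "\<forall>v. (False, v) \<in> lits g \<longrightarrow> asg b ys v \<longrightarrow> asg (B g) ys v"
    proof (intro allI impI)
      fix v assume neg: "(False, v) \<in> lits g" and true_b: "asg b ys v"
      show "asg (B g) ys v"
      proof (cases v)
        case (Inr y)
        with true_b show ?thesis by (simp add: asg_def)
      next
        case (Inl k)
        with true_b have "b k" by (simp add: asg_def)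
        show ?thesis
        proof (cases "a k = cb k")
          case False
          with \<open>b k\<close> B[OF g] Inl show ?thesis by (simp add: asg_def b_def)
        next
          case True
          with \<open>b k\<close> obtain f where "f \<in> set fs" "(True, Inl k) \<in> lits f" "B f k"
            by (auto simp: b_def)
          with separated g neg Inl have "f = g" by blast
          with \<open>B f k\<close> Inl show ?thesis by (simp add: asg_def)
        qed
      qed
    qed
  qed
  then have "eval (asg b ys) (And fs)" by simp
  moreover have "\<forall>k. a k \<noteq> cb k \<longrightarrow> b k = a k" by (simp add: b_def)
  ultimately show ?case by blast
qed

lemma wDNNF_heval_relaxed_iff_ex_eval:
  assumes "wDNNF F"
  shows "heval (\<lambda>k. k \<in> Q \<or> s k) (\<lambda>k. k \<in> Q \<or> \<not> s k) ys F
     \<longleftrightarrow> (\<exists>b. eval (asg (\<lambda>k. if k \<in> Q then b k else s k) ys) F)"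
proof
  assume "heval (\<lambda>k. k \<in> Q \<or> s k) (\<lambda>k. k \<in> Q \<or> \<not> s k) ys F"
  from wDNNF_heval_imp_eval[OF assms this] obtain b
    where "eval (asg b ys) F" and "\<forall>k. k \<notin> Q \<longrightarrow> b k = s k"
    by auto
  moreover from this(2) have "(\<lambda>k. if k \<in> Q then b k else s k) = b" by auto
  ultimately have "eval (asg (\<lambda>k. if k \<in> Q then b k else s k) ys) F" by simp
  then show "\<exists>b. eval (asg (\<lambda>k. if k \<in> Q then b k else s k) ys) F" by blast
next
  assume "\<exists>b. eval (asg (\<lambda>k. if k \<in> Q then b k else s k) ys) F"
  then obtain b where "eval (asg (\<lambda>k. if k \<in> Q then b k else s k) ys) F" ..
  then show "heval (\<lambda>k. k \<in> Q \<or> s k) (\<lambda>k. k \<in> Q \<or> \<not> s k) ys F"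
    by (subst (asm) heval_complement_eq_eval[symmetric]) (erule heval_mono; simp)
qed

text \<open>The equalities hold for every \<open>i\<close>; neither the bound on \<open>i\<close> nor the range of the
  output indices is needed.\<close>

theorem theorem2:
  fixes F :: "'y fvar nnf" and n :: nat
  assumes "\<forall>k. Inl k \<in> vars F \<longrightarrow> 1 \<le> k \<and> k \<le> n"
    and "wDNNF F"
  shows "\<forall>i\<in>{1..n}. \<forall>x ys. delta F i x ys = Delta F i x ys \<and> gamma F i x ys = Gamma F i x ys"
proof (intro ballI allI conjI)
  fix i :: nat and x :: "nat \<Rightarrow> bool" and ys :: "'y \<Rightarrow> bool"
  have quantified: "(\<lambda>k. if k < i then b k else if k = i then v else x k)
      = (\<lambda>k. if k \<in> {..<i} then b k else (x(i := v)) k)" for b v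
    by auto
  have "(\<lambda>k. if k < i then True else if k = i then False else x k)
      = (\<lambda>k. k \<in> {..<i} \<or> (x(i := False)) k)"
    and "(\<lambda>k. if k \<le> i then True else \<not> x k) = (\<lambda>k. k \<in> {..<i} \<or> \<not> (x(i := False)) k)"
    by auto
  then show "delta F i x ys = Delta F i x ys"
    unfolding delta_def Delta_def quantified
    by (simp only: wDNNF_heval_relaxed_iff_ex_eval[OF assms(2)])
  have "(\<lambda>k. if k \<le> i then True else x k) = (\<lambda>k. k \<in> {..<i} \<or> (x(i := True)) k)"
    and "(\<lambda>k. if k < i then True else if k = i then False else \<not> x k)
      = (\<lambda>k. k \<in> {..<i} \<or> \<not> (x(i := True)) k)"
    by auto
  then show "gamma F i x ys = Gamma F i x ys"
    unfolding gamma_def Gamma_def quantified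
    by (simp only: wDNNF_heval_relaxed_iff_ex_eval[OF assms(2)])
qed

end
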